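(* Let $X\subset\mathbb{R}^2$ be a finite set in convex position, not contained in a line. Then $$\mathcal{M}_X=\bigcap\{\mathcal{M}_{\{a,b,c\}} : abc \text{ is a tallest triangle of } X\}.$$
   Context: A set $S\subset\mathbb{R}^2$ is in convex position if every point of $S$ lies on the boundary of $\mathrm{conv}(S)$. For a point set $X$ and a point $O$, $X_O=2O-X$; $O$ is an admissible center for $X$ if $X\cup X_O$ is in convex position, and $\mathcal{M}_X$ is the set of all admissible centers for $X$. For a finite set $X$ in convex position not contained in a line, a side $ab$ of $X$ is a pair of points $a,b\in X$ that are consecutive among the points of $X$ along the boundary of $\mathrm{conv}(X)$ (so the segment $ab$ lies on the boundary of $\mathrm{conv}(X)$). If $ab$ is a side and $c\in X$ is a point of $X$ at maximal distance from the line $ab$, then $abc$ is called a tallest triangle of $X$ with respect to the side $ab$. *)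

theory Defs
  imports "HOL-Analysis.Analysis"
begin

type_synonym point = "real^2"

definition convex_position :: "point set \<Rightarrow> bool" where
  "convex_position S \<longleftrightarrow> S \<subseteq> frontier (convex hull S)"

definition reflect_set :: "point set \<Rightarrow> point \<Rightarrow> point set" where
  "reflect_set X p = (\<lambda>x. 2 *\<^sub>R p - x) ` X"

definition admissible_centers :: "point set \<Rightarrow> point set" where
  "admissible_centers X = {p. convex_position (X \<union> reflect_set X p)}"

text \<open>A side ab of X: distinct points of X, consecutive along the boundary of conv(X),
  i.e. the segment ab lies on the boundary of conv(X) and contains no other point of X.\<close>
definition is_side :: "point set \<Rightarrow> point \<Rightarrow> point \<Rightarrow> bool" where
  "is_side X a b \<longleftrightarrow> a \<in> X \<and> b \<in> X \<and> a \<noteq> b \<and>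
     closed_segment a b \<subseteq> frontier (convex hull X) \<and>
     X \<inter> open_segment a b = {}"

definition tallest_triangle :: "point set \<Rightarrow> point \<Rightarrow> point \<Rightarrow> point \<Rightarrow> bool" where
  "tallest_triangle X a b c \<longleftrightarrow> is_side X a b \<and> c \<in> X \<and>
     (\<forall>x\<in>X. infdist x (affine hull {a, b}) \<le> infdist c (affine hull {a, b}))"

end

theory Submission
  imports Defs
begin

text \<open>
  The set \<open>X \<union> X\<^sub>O\<close> is in convex position iff every \<open>x \<in> X\<close> admits a nonzero
  direction \<open>u\<close> in which \<open>x\<close> maximises \<open>u\<close> over \<open>X\<close> while its reflection \<open>2O - x\<close> lies
  on or below the opposite supporting line (a supporting slab).  This makes \<open>\<subseteq>\<close> a
  monotonicity statement.  For \<open>\<supseteq>\<close>, suppose \<open>z = 2O - x\<close> has no slab.  Minimising the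
  ratio \<open>(u\<bullet>z - min u) / (u\<bullet>x - min u)\<close> over the normal cone of \<open>X\<close> at \<open>x\<close> yields a
  minimum \<open>m > 0\<close> at some \<open>v\<close>, and by convex duality
  \<open>z - x = (1 - m)(k - x) + d\<close> with \<open>k\<close> on the face of \<open>X\<close> minimising \<open>v\<close> and \<open>d\<close> in
  the dual of the normal cone, \<open>v \<bullet> d = 0\<close>.  If \<open>d \<noteq> 0\<close>, the side of \<open>X\<close> at \<open>x\<close>
  pointing against \<open>d\<close>, with apex on the bottom face, is a tallest triangle; if \<open>d = 0\<close>,
  either \<open>k\<close> is a point of \<open>X\<close> (and some tallest triangle contains the antipodal pair
  \<open>x, k\<close>) or \<open>k\<close> lies inside a bottom side \<open>y\<^sub>1y\<^sub>2\<close> (and \<open>y\<^sub>1y\<^sub>2x\<close> is tallest).  In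
  every case \<open>z - x = \<alpha>(a - x) + \<beta>(b - x)\<close> for two vertices \<open>a, b\<close> of the triangle with
  \<open>\<alpha>, \<beta>, \<alpha> + \<beta> < 1\<close>, and no slab of a non-degenerate triangle allows that.
\<close>

section \<open>Orthogonality in the plane\<close>

definition perp :: "real^2 \<Rightarrow> real^2" where
  "perp u = vector [-(u$2), u$1]"

lemma perp_nth [simp]: "perp u $ 1 = -(u$2)" "perp u $ 2 = u$1"
  by (simp_all add: perp_def)

lemma perp_eq_0_iff [simp]: "perp u = 0 \<longleftrightarrow> u = 0"
  by (auto simp: vec_eq_iff forall_2)

lemma inner_real2: "(u::real^2) \<bullet> w = u$1 * w$1 + u$2 * w$2"
  by (simp add: inner_vec_def sum_2)

lemma inner_perp_self [simp]: "u \<bullet> perp u = 0" "perp u \<bullet> u = 0"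
  by (simp_all add: inner_real2)

lemma orthogonal_decomposition_real2:
  fixes u w :: "real^2"
  assumes "u \<noteq> 0"
  shows "w = ((u \<bullet> w) / (u \<bullet> u)) *\<^sub>R u + ((perp u \<bullet> w) / (u \<bullet> u)) *\<^sub>R perp u"
proof -
  have "u$1 * u$1 + u$2 * u$2 \<noteq> 0"
    using assms by (simp add: inner_real2[symmetric])
  then have "w$i = ((u \<bullet> w) / (u \<bullet> u)) * u$i + ((perp u \<bullet> w) / (u \<bullet> u)) * perp u$i"
    if "i = 1 \<or> i = 2" for i
    using that unfolding inner_real2 by (auto simp: divide_simps) (simp_all add: algebra_simps)
  then show ?thesis
    by (simp add: vec_eq_iff forall_2)
qed

lemma orthogonal_perp_imp_eq_0:
  fixes u w :: "real^2"
  assumes "u \<noteq> 0" "u \<bullet> w = 0" "perp u \<bullet> w = 0"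
  shows "w = 0"
  using orthogonal_decomposition_real2[OF assms(1), of w] assms(2,3) by simp

lemma orthogonal_imp_parallel_real2:
  fixes u w w' :: "real^2"
  assumes "u \<noteq> 0" "u \<bullet> w = 0" "u \<bullet> w' = 0" "w \<noteq> 0"
  obtains c where "w' = c *\<^sub>R w"
proof -
  have "w = ((perp u \<bullet> w) / (u \<bullet> u)) *\<^sub>R perp u" "w' = ((perp u \<bullet> w') / (u \<bullet> u)) *\<^sub>R perp u"
    using orthogonal_decomposition_real2[OF assms(1), of w]
      orthogonal_decomposition_real2[OF assms(1), of w'] assms(2,3) by simp_all
  then obtain a b where "w = a *\<^sub>R perp u" "w' = b *\<^sub>R perp u"
    by blast
  with assms(4) have "w' = (b / a) *\<^sub>R w"
    by simp
  then show thesis by (rule that)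
qed

lemma collinear_if_subset_line:
  fixes u :: "real^2"
  assumes "u \<noteq> 0" "S \<subseteq> {y. u \<bullet> y = r}"
  shows "collinear S"
  using aff_dim_subset[OF assms(2)] assms(1) by (simp add: collinear_aff_dim)

section \<open>Supporting slabs\<close>

lemma exists_supporting_hyperplane:
  fixes S :: "'a::euclidean_space set"
  assumes "convex S" "x \<in> S" "x \<notin> interior S"
  obtains u where "u \<noteq> 0" "\<And>y. y \<in> S \<Longrightarrow> u \<bullet> y \<le> u \<bullet> x"
proof (cases "affine hull S = UNIV")
  case True
  then have "x \<notin> rel_interior S"
    using assms(3) rel_interior_interior by blast
  moreover have "x \<in> closure S"
    using assms(2) closure_subset by blast
  ultimately obtain a where "a \<noteq> 0" "\<And>y. y \<in> closure S \<Longrightarrow> a \<bullet> x \<le> a \<bullet> y"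
    using supporting_hyperplane_relative_frontier[OF assms(1)] by metis
  then show thesis
    using that[of "-a"] closure_subset by auto
next
  case False
  then have "aff_dim S < DIM('a)"
    by (simp add: aff_dim_lt_full)
  then obtain a b where "a \<noteq> 0" "S \<subseteq> {y. a \<bullet> y = b}"
    using aff_lowdim_subset_hyperplane by metis
  then show thesis
    using that[of a] assms(2) by (auto simp: subset_iff)
qed

lemma in_frontier_convex_hull_if_supporting:
  fixes H :: "'a::euclidean_space set"
  assumes "u \<noteq> 0" "q \<in> convex hull H" "\<forall>s\<in>H. u \<bullet> s \<le> u \<bullet> q"
  shows "q \<in> frontier (convex hull H)"
proof -
  have "convex hull H \<subseteq> {y. u \<bullet> y \<le> u \<bullet> q}"
    using assms(3) by (intro hull_minimal) (auto simp: convex_halfspace_le)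
  then have "interior (convex hull H) \<subseteq> {y. u \<bullet> y < u \<bullet> q}"
    using interior_mono interior_halfspace_le[OF assms(1)] by blast
  then show ?thesis
    using assms(2) closure_subset by (auto simp: frontier_def)
qed

lemma convex_position_subset:
  assumes "convex_position S" "T \<subseteq> S"
  shows "convex_position T"
  unfolding convex_position_def
proof
  fix q assume "q \<in> T"
  then have "q \<notin> interior (convex hull T)"
    using assms interior_mono[OF hull_mono[OF assms(2)]]
    unfolding convex_position_def frontier_def by blast
  then show "q \<in> frontier (convex hull T)"
    using \<open>q \<in> T\<close> hull_inc closure_subset by (fastforce simp: frontier_def)
qed

lemma admissible_centers_antimono:
  "T \<subseteq> X \<Longrightarrow> admissible_centers X \<subseteq> admissible_centers T"
proof
  fix p assume "T \<subseteq> X" "p \<in> admissible_centers X"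
  moreover have "T \<union> reflect_set T p \<subseteq> X \<union> reflect_set X p"
    using \<open>T \<subseteq> X\<close> by (auto simp: reflect_set_def)
  ultimately show "p \<in> admissible_centers T"
    unfolding admissible_centers_def using convex_position_subset by blast
qed

definition supporting_slab :: "point set \<Rightarrow> point \<Rightarrow> point \<Rightarrow> bool" where
  "supporting_slab S x z \<longleftrightarrow> (\<exists>u. u \<noteq> 0 \<and> (\<forall>s\<in>S. u \<bullet> z \<le> u \<bullet> s \<and> u \<bullet> s \<le> u \<bullet> x))"

lemma reflect_set_union_symmetric:
  "r \<in> X \<union> reflect_set X p \<Longrightarrow> 2 *\<^sub>R p - r \<in> X \<union> reflect_set X p"
  by (auto simp: reflect_set_def)

lemma supporting_slab_reflect_iff:
  "supporting_slab X x (2 *\<^sub>R p - x) \<longleftrightarrow>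
    (\<exists>u. u \<noteq> 0 \<and> (\<forall>r\<in>X \<union> reflect_set X p. u \<bullet> r \<le> u \<bullet> x))"
proof -
  have "(\<forall>s\<in>X. u \<bullet> (2 *\<^sub>R p - x) \<le> u \<bullet> s \<and> u \<bullet> s \<le> u \<bullet> x) \<longleftrightarrow>
      (\<forall>r\<in>X \<union> reflect_set X p. u \<bullet> r \<le> u \<bullet> x)" for u
  proof (intro iffI ballI conjI)
    fix r assume "\<forall>s\<in>X. u \<bullet> (2 *\<^sub>R p - x) \<le> u \<bullet> s \<and> u \<bullet> s \<le> u \<bullet> x"
      and "r \<in> X \<union> reflect_set X p"
    then show "u \<bullet> r \<le> u \<bullet> x"
      by (auto simp: reflect_set_def inner_diff_right)
  next
    fix s assume "\<forall>r\<in>X \<union> reflect_set X p. u \<bullet> r \<le> u \<bullet> x" and "s \<in> X"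
    then have "u \<bullet> (2 *\<^sub>R p - s) \<le> u \<bullet> x" "u \<bullet> s \<le> u \<bullet> x"
      by (auto simp: reflect_set_def)
    then show "u \<bullet> (2 *\<^sub>R p - x) \<le> u \<bullet> s" "u \<bullet> s \<le> u \<bullet> x"
      by (simp_all add: inner_diff_right)
  qed
  then show ?thesis
    unfolding supporting_slab_def by blast
qed

lemma convex_position_reflect_iff:
  "convex_position (X \<union> reflect_set X p) \<longleftrightarrow> (\<forall>x\<in>X. supporting_slab X x (2 *\<^sub>R p - x))"
proof
  assume cp: "convex_position (X \<union> reflect_set X p)"
  let ?H = "convex hull (X \<union> reflect_set X p)"
  show "\<forall>x\<in>X. supporting_slab X x (2 *\<^sub>R p - x)"
  proof
    fix x assume "x \<in> X"
    then have "x \<in> ?H" "x \<notin> interior ?H"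
      using cp unfolding convex_position_def by (auto simp: hull_inc frontier_def)
    then obtain u where "u \<noteq> 0" "\<And>y. y \<in> ?H \<Longrightarrow> u \<bullet> y \<le> u \<bullet> x"
      by (rule exists_supporting_hyperplane[OF convex_convex_hull]) blast+
    then show "supporting_slab X x (2 *\<^sub>R p - x)"
      unfolding supporting_slab_reflect_iff by (auto simp: hull_inc)
  qed
next
  assume slab: "\<forall>x\<in>X. supporting_slab X x (2 *\<^sub>R p - x)"
  show "convex_position (X \<union> reflect_set X p)"
    unfolding convex_position_def
  proof
    fix q assume q: "q \<in> X \<union> reflect_set X p"
    then obtain x where x: "x \<in> X" "q = x \<or> q = 2 *\<^sub>R p - x"
      by (auto simp: reflect_set_def)
    then obtain u where u: "u \<noteq> 0" "\<forall>r\<in>X \<union> reflect_set X p. u \<bullet> r \<le> u \<bullet> x"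
      using slab unfolding supporting_slab_reflect_iff by blast
    have "(- u) \<bullet> r \<le> (- u) \<bullet> (2 *\<^sub>R p - x)" if "r \<in> X \<union> reflect_set X p" for r
    proof -
      have "u \<bullet> (2 *\<^sub>R p - r) \<le> u \<bullet> x"
        using u(2) reflect_set_union_symmetric[OF that] by blast
      then show ?thesis
        by (simp add: inner_diff_right)
    qed
    with x(2) u obtain u' where "u' \<noteq> 0" "\<forall>r\<in>X \<union> reflect_set X p. u' \<bullet> r \<le> u' \<bullet> q"
      by (metis neg_equal_0_iff_equal)
    then show "q \<in> frontier (convex hull (X \<union> reflect_set X p))"
      using in_frontier_convex_hull_if_supporting hull_inc[OF q] by blast
  qed
qed

lemma nonpos_eq_0_if_combination_below:
  fixes A B \<alpha> \<beta> :: real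
  assumes "A \<le> 0" "B \<le> 0" "\<alpha> * A + \<beta> * B \<le> A" "\<alpha> * A + \<beta> * B \<le> B"
    "\<alpha> < 1" "\<beta> < 1" "\<alpha> + \<beta> < 1"
  shows "A = 0 \<and> B = 0"
proof -
  have le1: "(1 - \<alpha>) * (-A) \<le> \<beta> * (-B)" and le2: "(1 - \<beta>) * (-B) \<le> \<alpha> * (-A)"
    using assms(3,4) by (simp_all add: algebra_simps)
  have nn: "0 \<le> (1 - \<alpha>) * (-A)" "0 \<le> (1 - \<beta>) * (-B)"
    using assms(1,2,5,6) by (simp_all add: mult_nonneg_nonpos)
  have "(1 - \<alpha>) * (-A) * ((1 - \<beta>) * (-B)) \<le> (\<beta> * (-B)) * (\<alpha> * (-A))"
    by (rule mult_mono[OF le1 le2]) (use nn le1 in linarith)+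
  then have "(1 - \<alpha> - \<beta>) * (A * B) \<le> 0"
    by (simp add: algebra_simps)
  then have "A * B \<le> 0"
    using assms(7) by (simp add: mult_le_0_iff)
  then have "A = 0 \<or> B = 0"
    using assms(1,2) mult_nonpos_nonpos[of A B] by auto
  moreover have "B = 0" if "A = 0"
    using le2 that assms(2,6) mult_le_cancel_left_pos[of "1 - \<beta>" "-B" 0] by simp
  moreover have "A = 0" if "B = 0"
    using le1 that assms(1,5) mult_le_cancel_left_pos[of "1 - \<alpha>" "-A" 0] by simp
  ultimately show ?thesis
    by blast
qed

lemma not_supporting_slab_if_low_combination:
  assumes "\<not> collinear T" "a \<in> T" "b \<in> T" "z - x = \<alpha> *\<^sub>R (a - x) + \<beta> *\<^sub>R (b - x)"
    "\<alpha> < 1" "\<beta> < 1" "\<alpha> + \<beta> < 1"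
  shows "\<not> supporting_slab T x z"
proof
  assume "supporting_slab T x z"
  then obtain u where u: "u \<noteq> 0" "\<forall>s\<in>T. u \<bullet> z \<le> u \<bullet> s \<and> u \<bullet> s \<le> u \<bullet> x"
    unfolding supporting_slab_def by blast
  have z: "u \<bullet> z - u \<bullet> x = \<alpha> * (u \<bullet> a - u \<bullet> x) + \<beta> * (u \<bullet> b - u \<bullet> x)"
    using arg_cong[OF assms(4), of "inner u"] by (simp add: inner_diff_right inner_add_right)
  have "u \<bullet> a - u \<bullet> x = 0 \<and> u \<bullet> b - u \<bullet> x = 0"
    using u(2) assms(2,3,5-7) by (intro nonpos_eq_0_if_combination_below) (auto simp: z[symmetric])
  then have "T \<subseteq> {y. u \<bullet> y = u \<bullet> x}"
    using u(2) z by fastforce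
  then show False
    using collinear_if_subset_line[OF u(1)] assms(1) by blast
qed

section \<open>Tallest triangles\<close>

lemma infdist_hyperplane:
  fixes v :: "'a::euclidean_space"
  assumes "v \<noteq> 0"
  shows "infdist p {y. v \<bullet> y = r} = \<bar>v \<bullet> p - r\<bar> / norm v"
proof (rule antisym)
  define q where "q = p - ((v \<bullet> p - r) / (v \<bullet> v)) *\<^sub>R v"
  have "q \<in> {y. v \<bullet> y = r}"
    using assms by (simp add: q_def inner_diff_right)
  moreover have "dist p q = \<bar>v \<bullet> p - r\<bar> / norm v"
    using assms by (simp add: q_def dist_norm dot_square_norm power2_eq_square)
  ultimately show "infdist p {y. v \<bullet> y = r} \<le> \<bar>v \<bullet> p - r\<bar> / norm v"
    by (metis infdist_le)
next
  have "(r / (v \<bullet> v)) *\<^sub>R v \<in> {y. v \<bullet> y = r}"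
    using assms by simp
  then have ne: "{y. v \<bullet> y = r} \<noteq> {}"
    by blast
  show "\<bar>v \<bullet> p - r\<bar> / norm v \<le> infdist p {y. v \<bullet> y = r}"
    unfolding infdist_notempty[OF ne]
  proof (rule cINF_greatest[OF ne])
    fix q assume "q \<in> {y. v \<bullet> y = r}"
    then have "\<bar>v \<bullet> p - r\<bar> \<le> norm v * dist p q"
      using Cauchy_Schwarz_ineq2[of v "p - q"] by (simp add: dist_norm inner_diff_right)
    then show "\<bar>v \<bullet> p - r\<bar> / norm v \<le> dist p q"
      using assms by (simp add: divide_le_eq mult.commute)
  qed
qed

lemma affine_hull_2_eq_line:
  fixes v a b :: "real^2"
  assumes "v \<noteq> 0" "a \<noteq> b" "v \<bullet> a = v \<bullet> b"
  shows "affine hull {a, b} = {y. v \<bullet> y = v \<bullet> a}"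
proof (rule affine_dim_equal)
  show "affine hull {a, b} \<subseteq> {y. v \<bullet> y = v \<bullet> a}"
    using assms(3) by (intro hull_minimal) (auto simp: affine_hyperplane)
  show "aff_dim (affine hull {a, b}) = aff_dim {y. v \<bullet> y = v \<bullet> a}"
    using assms(1,2) by (simp add: aff_dim_2)
qed (auto simp: affine_hyperplane hull_inc)

lemma inner_affine_combination:
  "u \<bullet> ((1 - t) *\<^sub>R a + t *\<^sub>R b) = u \<bullet> a + t * (u \<bullet> b - u \<bullet> a)"
  by (simp add: inner_add_right algebra_simps)

lemma open_segment_disjoint_if_gap:
  fixes v e a b :: "'a::euclidean_space"
  assumes "v \<bullet> a = v \<bullet> b" "e \<bullet> a < e \<bullet> b"
    and gap: "\<And>q. q \<in> X \<Longrightarrow> v \<bullet> q = v \<bullet> a \<Longrightarrow> e \<bullet> q \<le> e \<bullet> a \<or> e \<bullet> b \<le> e \<bullet> q"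
  shows "X \<inter> open_segment a b = {}"
proof (rule ccontr)
  assume "X \<inter> open_segment a b \<noteq> {}"
  then obtain q where "q \<in> X" "q \<in> open_segment a b"
    by blast
  then obtain t where q: "q \<in> X" "0 < t" "t < 1" "q = (1 - t) *\<^sub>R a + t *\<^sub>R b"
    unfolding in_segment by blast
  have "v \<bullet> q = v \<bullet> a" "e \<bullet> q = e \<bullet> a + t * (e \<bullet> b - e \<bullet> a)"
    using q(4) assms(1) by (simp_all add: inner_affine_combination)
  moreover have "0 < t * (e \<bullet> b - e \<bullet> a)" "t * (e \<bullet> b - e \<bullet> a) < e \<bullet> b - e \<bullet> a"
    using q(2,3) assms(2) by simp_all
  ultimately show False
    using gap[OF q(1)] by linarith
qed

lemma exists_next_point_on_line:
  fixes v e a :: "'a::euclidean_space"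
  assumes "finite X" "s \<in> X" "v \<bullet> s = v \<bullet> a" "e \<bullet> a < e \<bullet> s"
  obtains b where "b \<in> X" "v \<bullet> b = v \<bullet> a" "e \<bullet> a < e \<bullet> b" "X \<inter> open_segment a b = {}"
proof -
  define S where "S = {s\<in>X. v \<bullet> s = v \<bullet> a \<and> e \<bullet> a < e \<bullet> s}"
  have "finite S" "S \<noteq> {}"
    using assms by (auto simp: S_def)
  then obtain b where b: "is_arg_min (\<lambda>s. e \<bullet> s) (\<lambda>s. s \<in> S) b"
    using ex_is_arg_min_if_finite by blast
  then have "b \<in> X" "v \<bullet> b = v \<bullet> a" "e \<bullet> a < e \<bullet> b"
    by (auto simp: is_arg_min_linorder S_def)
  moreover have "X \<inter> open_segment a b = {}"
    using b \<open>v \<bullet> b = v \<bullet> a\<close> \<open>e \<bullet> a < e \<bullet> b\<close>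
    by (intro open_segment_disjoint_if_gap[of v a b e]) (force simp: is_arg_min_linorder S_def)+
  ultimately show thesis
    by (rule that)
qed

lemma exists_side_on_line:
  fixes v :: "'a::euclidean_space"
  assumes "finite X" "s \<in> X" "s \<noteq> a" "v \<bullet> s = v \<bullet> a"
  obtains b where "b \<in> X" "b \<noteq> a" "v \<bullet> b = v \<bullet> a" "X \<inter> open_segment a b = {}"
proof -
  have "0 < (s - a) \<bullet> (s - a)"
    using assms(3) by simp
  then have "(s - a) \<bullet> a < (s - a) \<bullet> s"
    by (simp add: inner_diff_right)
  then obtain b where "b \<in> X" "v \<bullet> b = v \<bullet> a" "(s - a) \<bullet> a < (s - a) \<bullet> b"
    "X \<inter> open_segment a b = {}"
    using exists_next_point_on_line[OF assms(1,2,4)] by blast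
  then show thesis
    using that by force
qed

lemma tallest_triangle_if_extremal:
  assumes "v \<noteq> 0" "a \<in> X" "b \<in> X" "a \<noteq> b" "X \<inter> open_segment a b = {}"
    and top: "\<forall>s\<in>X. v \<bullet> s \<le> v \<bullet> a" "v \<bullet> b = v \<bullet> a"
    and bottom: "c \<in> X" "\<forall>s\<in>X. v \<bullet> c \<le> v \<bullet> s"
  shows "tallest_triangle X a b c"
proof -
  have "q \<in> frontier (convex hull X)" if q: "q \<in> closed_segment a b" for q
  proof (rule in_frontier_convex_hull_if_supporting[OF assms(1)])
    show "q \<in> convex hull X"
      using q closed_segment_subset_convex_hull[OF hull_inc hull_inc] assms(2,3) by blast
    obtain t where "q = (1 - t) *\<^sub>R a + t *\<^sub>R b"
      using q unfolding in_segment by blast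
    then have "v \<bullet> q = v \<bullet> a"
      using top(2) by (simp add: inner_affine_combination)
    then show "\<forall>s\<in>X. v \<bullet> s \<le> v \<bullet> q"
      using top(1) by simp
  qed
  then have "is_side X a b"
    using assms(2-5) unfolding is_side_def by blast
  moreover have "infdist s (affine hull {a, b}) \<le> infdist c (affine hull {a, b})" if "s \<in> X" for s
    using top bottom that assms(1)
    by (simp add: affine_hull_2_eq_line[OF assms(1,4) top(2)[symmetric]] infdist_hyperplane
        divide_right_mono)
  ultimately show ?thesis
    unfolding tallest_triangle_def using bottom(1) by blast
qed

lemma tallest_triangle_not_collinear:
  assumes "tallest_triangle X a b c" "\<not> collinear X"
  shows "\<not> collinear {a, b, c}"
proof
  assume "collinear {a, b, c}"
  moreover have "a \<noteq> b"
    using assms(1) unfolding tallest_triangle_def is_side_def by blast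
  ultimately have "c \<in> affine hull {a, b}"
    by (rule collinear_3_imp_in_affine_hull)
  then have "infdist c (affine hull {a, b}) = 0"
    by simp
  then have "infdist s (affine hull {a, b}) = 0" if "s \<in> X" for s
    using assms(1) that infdist_nonneg unfolding tallest_triangle_def by (metis order_antisym)
  then have "X \<subseteq> affine hull {a, b}"
    using in_closed_iff_infdist_zero[OF closed_affine_hull, of "{a, b}"] by auto
  then show False
    using assms(2) collinear_affine_hull by blast
qed

lemma tallest_triangle_if_tie_at_top:
  fixes v :: "real^2"
  assumes "finite X" "v \<noteq> 0" "x \<in> X" "y \<in> X"
    "\<forall>s\<in>X. v \<bullet> s \<le> v \<bullet> x" "\<forall>s\<in>X. v \<bullet> y \<le> v \<bullet> s" "s \<in> X" "s \<noteq> x" "v \<bullet> s = v \<bullet> x"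
  obtains b where "tallest_triangle X x b y"
proof -
  obtain b where "b \<in> X" "b \<noteq> x" "v \<bullet> b = v \<bullet> x" "X \<inter> open_segment x b = {}"
    using exists_side_on_line[OF assms(1,7-9)] by blast
  then show thesis
    using that tallest_triangle_if_extremal assms by metis
qed

lemma exists_first_root:
  fixes a b :: "'i \<Rightarrow> real"
  assumes "finite I" "\<forall>i\<in>I. a i < 0" "\<exists>i\<in>I. b i \<noteq> 0"
  obtains t where "\<forall>i\<in>I. a i + t * b i \<le> 0" "\<exists>i\<in>I. a i + t * b i = 0"
proof -
  define R where "R = (\<lambda>i. - a i / b i) ` {i\<in>I. b i \<noteq> 0}"
  have "finite R" "R \<noteq> {}"
    using assms(1,3) by (auto simp: R_def)
  then obtain t where t: "is_arg_min abs (\<lambda>r. r \<in> R) t"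
    using ex_is_arg_min_if_finite by blast
  then obtain j where "j \<in> I" "b j \<noteq> 0" "t = - a j / b j"
    by (auto simp: is_arg_min_linorder R_def)
  then have root: "\<exists>i\<in>I. a i + t * b i = 0"
    by (intro bexI[of _ j]) auto
  have "a i + t * b i \<le> 0" if i: "i \<in> I" for i
  proof (rule ccontr)
    assume "\<not> a i + t * b i \<le> 0"
    then have pos: "0 < - a i" "- a i < t * b i"
      using assms(2) i by auto
    then have "t \<noteq> 0" "b i \<noteq> 0"
      by auto
    define s where "s = - a i / (t * b i)"
    have "0 < t * b i"
      using pos by linarith
    then have "0 < s" "s < 1"
      using pos unfolding s_def by (simp_all only: divide_pos_pos divide_less_eq_1_pos)
    then have "\<bar>s * t\<bar> < \<bar>t\<bar>"
      using \<open>t \<noteq> 0\<close> by (simp add: abs_mult)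
    moreover have "s * t \<in> R"
      using i \<open>t \<noteq> 0\<close> \<open>b i \<noteq> 0\<close> by (force simp: R_def s_def)
    ultimately show False
      using t by (auto simp: is_arg_min_linorder)
  qed
  then show thesis
    using that root by blast
qed

lemma tallest_triangle_through_pair_if_tie:
  fixes u :: "real^2"
  assumes "finite X" "u \<noteq> 0" "x \<in> X" "y \<in> X"
    "\<forall>s\<in>X. u \<bullet> s \<le> u \<bullet> x" "\<forall>s\<in>X. u \<bullet> y \<le> u \<bullet> s"
    and tie: "(\<exists>s\<in>X. s \<noteq> x \<and> u \<bullet> s = u \<bullet> x) \<or> (\<exists>s\<in>X. s \<noteq> y \<and> u \<bullet> s = u \<bullet> y)"
  obtains a b c where "tallest_triangle X a b c" "x \<in> {a, b, c}" "y \<in> {a, b, c}"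
  using tie
proof
  assume "\<exists>s\<in>X. s \<noteq> x \<and> u \<bullet> s = u \<bullet> x"
  then obtain s where "s \<in> X" "s \<noteq> x" "u \<bullet> s = u \<bullet> x"
    by blast
  then obtain b where "tallest_triangle X x b y"
    using tallest_triangle_if_tie_at_top[OF assms(1-6)] by metis
  then show thesis
    using that[of x b y] by simp
next
  assume "\<exists>s\<in>X. s \<noteq> y \<and> u \<bullet> s = u \<bullet> y"
  then obtain s where s: "s \<in> X" "s \<noteq> y" "(- u) \<bullet> s = (- u) \<bullet> y"
    by auto
  have "- u \<noteq> 0" "\<forall>s\<in>X. (- u) \<bullet> s \<le> (- u) \<bullet> y" "\<forall>s\<in>X. (- u) \<bullet> x \<le> (- u) \<bullet> s"
    using assms(2,5,6) by auto
  then obtain b where "tallest_triangle X y b x"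
    using tallest_triangle_if_tie_at_top[OF assms(1) _ assms(4,3) _ _ s] by metis
  then show thesis
    using that[of y b x] by simp
qed

lemma exists_rotation_with_tie:
  fixes v :: "real^2"
  assumes "finite X" "\<not> collinear X" "v \<noteq> 0" "x \<in> X"
    and strict: "\<forall>s\<in>X - {x}. v \<bullet> (s - x) < 0" "\<forall>s\<in>X - {y}. v \<bullet> (y - s) < 0"
  obtains u where "u \<noteq> 0" "\<forall>s\<in>X. u \<bullet> (s - x) \<le> 0" "\<forall>s\<in>X. u \<bullet> (y - s) \<le> 0"
    "(\<exists>s\<in>X - {x}. u \<bullet> (s - x) = 0) \<or> (\<exists>s\<in>X - {y}. u \<bullet> (y - s) = 0)"
proof -
  \<comment> \<open>Tilt \<open>v\<close> along \<open>perp v\<close> until a further point of \<open>X\<close> reaches one of the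
    two supporting lines.\<close>
  define w where "w = perp v"
  define I where "I = (X - {x}) \<times> {True} \<union> (X - {y}) \<times> {False}"
  define f where "f i = (if snd i then fst i - x else y - fst i)" for i :: "point \<times> bool"
  have "finite I"
    using assms(1) by (simp add: I_def)
  moreover have "\<forall>i\<in>I. v \<bullet> f i < 0"
    using strict by (auto simp: I_def f_def)
  moreover have "\<exists>i\<in>I. w \<bullet> f i \<noteq> 0"
  proof -
    have "\<not> X \<subseteq> {q. w \<bullet> q = w \<bullet> x}"
      using collinear_if_subset_line[of w X "w \<bullet> x"] assms(2,3) by (auto simp: w_def)
    then obtain s where "s \<in> X - {x}" "w \<bullet> (s - x) \<noteq> 0"
      by (auto simp: inner_diff_right)
    then show ?thesis
      by (intro bexI[of _ "(s, True)"]) (auto simp: I_def f_def)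
  qed
  ultimately obtain t where t: "\<forall>i\<in>I. v \<bullet> f i + t * (w \<bullet> f i) \<le> 0"
    "\<exists>i\<in>I. v \<bullet> f i + t * (w \<bullet> f i) = 0"
    by (rule exists_first_root)
  define u where "u = v + t *\<^sub>R w"
  have uf: "u \<bullet> f i = v \<bullet> f i + t * (w \<bullet> f i)" for i
    by (simp add: u_def inner_add_left)
  show thesis
  proof (rule that)
    have "v \<bullet> u = v \<bullet> v"
      by (simp add: u_def w_def inner_add_right)
    then show "u \<noteq> 0"
      using assms(3) by auto
    have nonpos: "u \<bullet> f i \<le> 0" if "i \<in> I" for i
      using t(1) that uf by simp
    show "\<forall>s\<in>X. u \<bullet> (s - x) \<le> 0"
      using nonpos[of "(s, True)" for s] by (force simp: I_def f_def)
    show "\<forall>s\<in>X. u \<bullet> (y - s) \<le> 0"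
      using nonpos[of "(s, False)" for s] by (force simp: I_def f_def)
    obtain i where "i \<in> I" "u \<bullet> f i = 0"
      using t(2) uf by auto
    then show "(\<exists>s\<in>X - {x}. u \<bullet> (s - x) = 0) \<or> (\<exists>s\<in>X - {y}. u \<bullet> (y - s) = 0)"
      by (auto simp: I_def f_def)
  qed
qed

lemma tallest_triangle_through_pair:
  fixes v :: "real^2"
  assumes "finite X" "\<not> collinear X" "v \<noteq> 0" "x \<in> X" "y \<in> X"
    "\<forall>s\<in>X. v \<bullet> s \<le> v \<bullet> x" "\<forall>s\<in>X. v \<bullet> y \<le> v \<bullet> s"
  obtains a b c where "tallest_triangle X a b c" "x \<in> {a, b, c}" "y \<in> {a, b, c}"
proof (cases "(\<exists>s\<in>X. s \<noteq> x \<and> v \<bullet> s = v \<bullet> x) \<or> (\<exists>s\<in>X. s \<noteq> y \<and> v \<bullet> s = v \<bullet> y)")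
  case True
  then show thesis
    using that by (rule tallest_triangle_through_pair_if_tie[OF assms(1,3-7)])
next
  case False
  then have "\<forall>s\<in>X - {x}. v \<bullet> (s - x) < 0" "\<forall>s\<in>X - {y}. v \<bullet> (y - s) < 0"
    using assms(6,7) by (auto simp: inner_diff_right less_le)
  then obtain u where "u \<noteq> 0" "\<forall>s\<in>X. u \<bullet> (s - x) \<le> 0" "\<forall>s\<in>X. u \<bullet> (y - s) \<le> 0"
    "(\<exists>s\<in>X - {x}. u \<bullet> (s - x) = 0) \<or> (\<exists>s\<in>X - {y}. u \<bullet> (y - s) = 0)"
    by (rule exists_rotation_with_tie[OF assms(1-4)])
  then have "u \<noteq> 0" "\<forall>s\<in>X. u \<bullet> s \<le> u \<bullet> x" "\<forall>s\<in>X. u \<bullet> y \<le> u \<bullet> s"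
    "(\<exists>s\<in>X. s \<noteq> x \<and> u \<bullet> s = u \<bullet> x) \<or> (\<exists>s\<in>X. s \<noteq> y \<and> u \<bullet> s = u \<bullet> y)"
    by (auto simp: inner_diff_right)
  then show thesis
    using that by (rule tallest_triangle_through_pair_if_tie[OF assms(1) _ assms(4,5)])
qed

section \<open>The normal cone at a point\<close>

definition min_inner :: "'a::real_inner set \<Rightarrow> 'a \<Rightarrow> real" where
  "min_inner X u = Min ((\<lambda>s. u \<bullet> s) ` X)"

lemma min_inner_le: "finite X \<Longrightarrow> s \<in> X \<Longrightarrow> min_inner X u \<le> u \<bullet> s"
  unfolding min_inner_def by simp

lemma min_inner_attained:
  assumes "finite X" "X \<noteq> {}"
  obtains s where "s \<in> X" "min_inner X u = u \<bullet> s"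
proof -
  have "Min ((\<lambda>s. u \<bullet> s) ` X) \<in> (\<lambda>s. u \<bullet> s) ` X"
    using assms by (intro Min_in) auto
  then show thesis
    using that unfolding min_inner_def by blast
qed

lemma min_inner_scaleR:
  assumes "finite X" "X \<noteq> {}" "0 \<le> c"
  shows "min_inner X (c *\<^sub>R u) = c * min_inner X u"
proof -
  have "(\<lambda>s. (c *\<^sub>R u) \<bullet> s) ` X = (\<lambda>r. c * r) ` (\<lambda>s. u \<bullet> s) ` X"
    by (simp add: image_image)
  then show ?thesis
    unfolding min_inner_def using assms
    by (simp add: mono_Min_commute[symmetric] monoI mult_left_mono)
qed

lemma continuous_on_min_inner:
  assumes "finite X" "X \<noteq> {}"
  shows "continuous_on A (min_inner X)"
  using assms
proof (induction X rule: finite_ne_induct)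
  case (singleton x)
  then show ?case
    by (simp add: min_inner_def continuous_intros)
next
  case (insert x F)
  then have "min_inner (insert x F) = (\<lambda>u. min (u \<bullet> x) (min_inner F u))"
    by (auto simp: min_inner_def fun_eq_iff)
  then show ?case
    using insert by (simp add: continuous_intros)
qed

definition normal_cone :: "'a::real_inner set \<Rightarrow> 'a \<Rightarrow> 'a set" where
  "normal_cone X x = {u. \<forall>s\<in>X. u \<bullet> s \<le> u \<bullet> x}"

lemma normal_cone_iff: "u \<in> normal_cone X x \<longleftrightarrow> (\<forall>s\<in>X. u \<bullet> s \<le> u \<bullet> x)"
  by (simp add: normal_cone_def)

lemma closed_normal_cone: "closed (normal_cone X (x::'a::euclidean_space))"
proof -
  have "(s - x) \<bullet> u \<le> 0 \<longleftrightarrow> u \<bullet> s \<le> u \<bullet> x" for s u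
    by (simp add: inner_commute[of _ u] inner_diff_right)
  then have "normal_cone X x = (\<Inter>s\<in>X. {u. (s - x) \<bullet> u \<le> 0})"
    by (auto simp: normal_cone_def)
  then show ?thesis
    by (simp add: closed_INT closed_halfspace_le)
qed

lemma scaleR_in_normal_cone: "u \<in> normal_cone X x \<Longrightarrow> 0 \<le> c \<Longrightarrow> c *\<^sub>R u \<in> normal_cone X x"
  by (simp add: normal_cone_def mult_left_mono)

lemma ratio_attains_min_on_cone:
  fixes f g :: "'a::euclidean_space \<Rightarrow> real"
  assumes "closed N" "\<And>u c. u \<in> N \<Longrightarrow> 0 < c \<Longrightarrow> c *\<^sub>R u \<in> N" "u0 \<in> N" "u0 \<noteq> 0"
    and "continuous_on N f" "continuous_on N g"
    and "\<And>u c. u \<in> N \<Longrightarrow> 0 < c \<Longrightarrow> f (c *\<^sub>R u) = c * f u"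
    and "\<And>u c. u \<in> N \<Longrightarrow> 0 < c \<Longrightarrow> g (c *\<^sub>R u) = c * g u"
    and g_pos: "\<And>u. u \<in> N \<Longrightarrow> u \<noteq> 0 \<Longrightarrow> 0 < g u"
  obtains v where "v \<in> N" "v \<noteq> 0" "\<And>u. u \<in> N \<Longrightarrow> u \<noteq> 0 \<Longrightarrow> f v / g v \<le> f u / g u"
proof -
  define K where "K = N \<inter> sphere 0 1"
  have normalize: "u /\<^sub>R norm u \<in> K" "f (u /\<^sub>R norm u) / g (u /\<^sub>R norm u) = f u / g u"
    if "u \<in> N" "u \<noteq> 0" for u
    using that assms(2,7,8) by (simp_all add: K_def)
  have cK: "compact K"
    unfolding K_def using assms(1) by (intro closed_Int_compact) auto
  have neK: "K \<noteq> {}"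
    using normalize(1)[OF assms(3,4)] by blast
  have contK: "continuous_on K (\<lambda>u. f u / g u)"
  proof (intro continuous_on_divide)
    show "continuous_on K f" "continuous_on K g"
      by (rule continuous_on_subset[OF assms(5)] continuous_on_subset[OF assms(6)];
          simp add: K_def)+
    show "\<forall>u\<in>K. g u \<noteq> 0"
      using g_pos by (fastforce simp: K_def)
  qed
  obtain v where v: "v \<in> K" "\<And>u. u \<in> K \<Longrightarrow> f v / g v \<le> f u / g u"
    using continuous_attains_inf[OF cK neK contK] by blast
  show thesis
  proof (rule that)
    show "v \<in> N" "v \<noteq> 0"
      using v(1) by (auto simp: K_def)
    show "f v / g v \<le> f u / g u" if "u \<in> N" "u \<noteq> 0" for u
      using v(2)[OF normalize(1)[OF that]] normalize(2)[OF that] by simp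
  qed
qed

lemma min_inner_less_if_not_collinear:
  fixes X :: "point set"
  assumes "finite X" "\<not> collinear X" "u \<in> normal_cone X x" "u \<noteq> 0"
  shows "min_inner X u < u \<bullet> x"
proof (rule ccontr)
  assume ge: "\<not> min_inner X u < u \<bullet> x"
  have "u \<bullet> s = u \<bullet> x" if "s \<in> X" for s
  proof -
    have "min_inner X u \<le> u \<bullet> s" "u \<bullet> s \<le> u \<bullet> x"
      using min_inner_le[OF assms(1) that] assms(3) that by (auto simp: normal_cone_iff)
    then show ?thesis
      using ge by linarith
  qed
  then have "X \<subseteq> {y. u \<bullet> y = u \<bullet> x}"
    by blast
  then show False
    using collinear_if_subset_line[OF assms(4)] assms(2) by blast
qed

lemma min_inner_less_if_no_slab:
  fixes X :: "point set"
  assumes "finite X" "\<not> supporting_slab X x z" "u \<in> normal_cone X x" "u \<noteq> 0"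
  shows "min_inner X u < u \<bullet> z"
proof (rule ccontr)
  assume le: "\<not> min_inner X u < u \<bullet> z"
  have "u \<bullet> z \<le> u \<bullet> s \<and> u \<bullet> s \<le> u \<bullet> x" if "s \<in> X" for s
    using min_inner_le[OF assms(1) that, of u] assms(3) that le by (auto simp: normal_cone_iff)
  then show False
    using assms(2,4) unfolding supporting_slab_def by blast
qed

lemma exists_nonzero_normal:
  fixes X :: "'a::euclidean_space set"
  assumes "x \<in> X" "x \<in> frontier (convex hull X)"
  obtains u where "u \<in> normal_cone X x" "u \<noteq> 0"
proof -
  have "x \<in> convex hull X" "x \<notin> interior (convex hull X)"
    using assms by (auto simp: hull_inc frontier_def)
  then obtain u where "u \<noteq> 0" "\<And>y. y \<in> convex hull X \<Longrightarrow> u \<bullet> y \<le> u \<bullet> x"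
    by (rule exists_supporting_hyperplane[OF convex_convex_hull]) blast+
  moreover have "\<forall>s\<in>X. u \<bullet> s \<le> u \<bullet> x"
    using calculation(2) by (simp add: hull_inc)
  ultimately show thesis
    using that by (simp add: normal_cone_iff)
qed

lemma min_ratio_certificate:
  fixes X :: "point set"
  assumes "finite X" "\<not> collinear X" "x \<in> X" "x \<in> frontier (convex hull X)"
    and no_slab: "\<not> supporting_slab X x z"
  obtains v m where "v \<in> normal_cone X x" "v \<noteq> 0" "0 < m"
    "\<And>u. u \<in> normal_cone X x \<Longrightarrow> m * (u \<bullet> x - min_inner X u) \<le> u \<bullet> z - min_inner X u"
    "v \<bullet> z - min_inner X v = m * (v \<bullet> x - min_inner X v)"
proof -
  let ?N = "normal_cone X x"
  define f where "f u = u \<bullet> z - min_inner X u" for u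
  define g where "g u = u \<bullet> x - min_inner X u" for u
  have ne: "X \<noteq> {}"
    using assms(3) by blast
  have g_pos: "0 < g u" if "u \<in> ?N" "u \<noteq> 0" for u
    using min_inner_less_if_not_collinear[OF assms(1,2) that] by (simp add: g_def)
  have f_pos: "0 < f u" if "u \<in> ?N" "u \<noteq> 0" for u
    using min_inner_less_if_no_slab[OF assms(1) no_slab that] by (simp add: f_def)
  obtain u0 where u0: "u0 \<in> ?N" "u0 \<noteq> 0"
    by (rule exists_nonzero_normal[OF assms(3,4)])
  have cont: "continuous_on ?N f" "continuous_on ?N g"
    unfolding f_def g_def using continuous_on_min_inner[OF assms(1) ne]
    by (auto intro!: continuous_intros)
  have cone: "c *\<^sub>R u \<in> ?N" if "u \<in> ?N" "0 < c" for c u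
    using scaleR_in_normal_cone[OF that(1)] that(2) by simp
  have hom: "f (c *\<^sub>R u) = c * f u" "g (c *\<^sub>R u) = c * g u" if "u \<in> ?N" "0 < c" for c u
    using that min_inner_scaleR[OF assms(1) ne, of c u] by (simp_all add: f_def g_def algebra_simps)
  obtain v where v: "v \<in> ?N" "v \<noteq> 0" "\<And>u. u \<in> ?N \<Longrightarrow> u \<noteq> 0 \<Longrightarrow> f v / g v \<le> f u / g u"
    by (rule ratio_attains_min_on_cone[OF closed_normal_cone cone u0 cont hom g_pos]) blast+
  show thesis
  proof (rule that[OF v(1,2)])
    show "0 < f v / g v"
      using f_pos[OF v(1,2)] g_pos[OF v(1,2)] by simp
    show "f v / g v * (u \<bullet> x - min_inner X u) \<le> u \<bullet> z - min_inner X u" if "u \<in> ?N" for u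
    proof (cases "u = 0")
      case True
      then show ?thesis
        using min_inner_scaleR[OF assms(1) ne, of 0 u] by simp
    next
      case False
      then show ?thesis
        using v(3)[OF that False] g_pos[OF that False] by (simp add: f_def g_def pos_le_divide_eq)
    qed
    show "v \<bullet> z - min_inner X v = f v / g v * (v \<bullet> x - min_inner X v)"
      using g_pos[OF v(1,2)] by (simp add: f_def g_def)
  qed
qed

lemma inner_nonneg_on_convex_cone_hull:
  assumes "u \<in> normal_cone X x" "c \<in> convex_cone hull ((\<lambda>s. x - s) ` X)"
  shows "0 \<le> u \<bullet> c"
proof -
  have "(\<lambda>s. x - s) ` X \<subseteq> {c. 0 \<le> u \<bullet> c}"
    using assms(1) by (auto simp: normal_cone_iff inner_diff_right)
  then have "convex_cone hull ((\<lambda>s. x - s) ` X) \<subseteq> {c. 0 \<le> u \<bullet> c}"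
    by (rule hull_minimal) (rule convex_cone_halfspace_ge)
  then show ?thesis
    using assms(2) by blast
qed

lemma inner_nonpos_if_convex_cone_hull_bounded:
  assumes "\<forall>c\<in>convex_cone hull S. a \<bullet> c < b" "s \<in> S"
  shows "a \<bullet> s \<le> 0"
proof (rule ccontr)
  assume pos: "\<not> a \<bullet> s \<le> 0"
  have "a \<bullet> 0 < b"
    using assms(1) convex_cone_hull_contains_0 by blast
  then have "(b / (a \<bullet> s)) *\<^sub>R s \<in> convex_cone hull S"
    using pos assms(2) by (simp add: convex_cone_hull_mul hull_inc)
  moreover have "a \<bullet> ((b / (a \<bullet> s)) *\<^sub>R s) = b"
    using pos by simp
  ultimately show False
    using assms(1) by fastforce
qed

lemma separate_compact_from_convex_cone_hull:
  fixes S E :: "'a::euclidean_space set"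
  assumes "finite S" "convex E" "compact E" "E \<noteq> {}" "convex_cone hull S \<inter> E = {}"
  obtains a b where "0 < b" "\<forall>s\<in>S. a \<bullet> s \<le> 0" "\<forall>e\<in>E. b < a \<bullet> e"
proof -
  have "convex (convex_cone hull S)" "closed (convex_cone hull S)"
    using assms(1) by (simp_all add: convex_convex_cone_hull closed_convex_cone_hull)
  then have "\<exists>a b. (\<forall>c\<in>convex_cone hull S. a \<bullet> c < b) \<and> (\<forall>e\<in>E. b < a \<bullet> e)"
    by (rule separating_hyperplane_closed_compact[OF _ _ assms(2-5)])
  then obtain a b where ab: "\<forall>c\<in>convex_cone hull S. a \<bullet> c < b" "\<forall>e\<in>E. b < a \<bullet> e"
    by blast
  have "a \<bullet> 0 < b"
    using ab(1) convex_cone_hull_contains_0 by blast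
  then have "0 < b"
    by simp
  moreover have "\<forall>s\<in>S. a \<bullet> s \<le> 0"
    using inner_nonpos_if_convex_cone_hull_bounded[OF ab(1)] by blast
  ultimately show thesis
    using that ab(2) by blast
qed

lemma exists_hull_point_with_dual_remainder:
  fixes X :: "'a::euclidean_space set"
  assumes "finite X" "x \<in> X" "0 < \<mu>"
    and bound: "\<And>u. u \<in> normal_cone X x \<Longrightarrow> \<mu> * (min_inner X u - u \<bullet> x) \<le> u \<bullet> w"
  obtains k where "k \<in> convex hull X" "\<forall>u\<in>normal_cone X x. 0 \<le> u \<bullet> (w - \<mu> *\<^sub>R (k - x))"
proof -
  define C where "C = convex_cone hull ((\<lambda>s. x - s) ` X)"
  define E where "E = (\<lambda>k. (w + \<mu> *\<^sub>R x) + (- \<mu>) *\<^sub>R k) ` (convex hull X)"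
  have E_eq: "(w + \<mu> *\<^sub>R x) + (- \<mu>) *\<^sub>R k = w - \<mu> *\<^sub>R (k - x)" for k
    by (simp add: algebra_simps)
  have "C \<inter> E \<noteq> {}"
  proof
    assume disj: "C \<inter> E = {}"
    have E: "convex E" "compact E"
      unfolding E_def using assms(1)
      by (intro convex_affinity compact_affinity convex_convex_hull finite_imp_compact_convex_hull)+
    have ne: "E \<noteq> {}"
      unfolding E_def using hull_inc[OF assms(2)] by blast
    have fin: "finite ((\<lambda>s. x - s) ` X)"
      using assms(1) by simp
    obtain a b where ab: "0 < b" "\<forall>s\<in>(\<lambda>s. x - s) ` X. a \<bullet> s \<le> 0" "\<forall>e\<in>E. b < a \<bullet> e"
      by (rule separate_compact_from_convex_cone_hull[OF fin E ne disj[unfolded C_def]])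
    then have na: "- a \<in> normal_cone X x"
      by (auto simp: normal_cone_iff inner_diff_right)
    obtain y where y: "y \<in> X" "min_inner X (- a) = (- a) \<bullet> y"
      using min_inner_attained[OF assms(1)] assms(2) by blast
    then have "w - \<mu> *\<^sub>R (y - x) \<in> E"
      unfolding E_def E_eq[symmetric] by (intro imageI hull_inc)
    then have "b < a \<bullet> w - \<mu> * (a \<bullet> (y - x))"
      using ab(3) by (auto simp: inner_diff_right)
    moreover have "\<mu> * ((- a) \<bullet> y - (- a) \<bullet> x) \<le> (- a) \<bullet> w"
      using bound[OF na] y(2) by simp
    ultimately show False
      using ab(1) by (simp add: inner_diff_right algebra_simps)
  qed
  then obtain k where "k \<in> convex hull X" "w - \<mu> *\<^sub>R (k - x) \<in> C"
    unfolding E_def E_eq by blast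
  then show thesis
    using that inner_nonneg_on_convex_cone_hull unfolding C_def by blast
qed

lemma exists_decomposition:
  fixes X :: "'a::euclidean_space set"
  assumes "finite X" "x \<in> X" "v \<in> normal_cone X x"
    and bound: "\<And>u. u \<in> normal_cone X x \<Longrightarrow> \<mu> * (min_inner X u - u \<bullet> x) \<le> u \<bullet> (z - x)"
    and tight: "v \<bullet> (z - x) = \<mu> * (min_inner X v - v \<bullet> x)"
  obtains k d where "k \<in> convex hull X" "v \<bullet> k = min_inner X v"
    "\<forall>u\<in>normal_cone X x. 0 \<le> u \<bullet> d" "v \<bullet> d = 0" "z - x = \<mu> *\<^sub>R (k - x) + d"
proof (cases "\<mu> \<le> 0")
  case True
  have "X \<noteq> {}"
    using assms(2) by blast
  then obtain k where k: "k \<in> X" "min_inner X v = v \<bullet> k"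
    using min_inner_attained[OF assms(1)] by metis
  define d where "d = z - x - \<mu> *\<^sub>R (k - x)"
  have "0 \<le> u \<bullet> d" if "u \<in> normal_cone X x" for u
  proof -
    have "\<mu> * (u \<bullet> k - u \<bullet> x) \<le> \<mu> * (min_inner X u - u \<bullet> x)"
      using min_inner_le[OF assms(1) k(1)] True by (simp add: mult_left_mono_neg)
    then show ?thesis
      using bound[OF that] by (simp add: d_def inner_diff_right)
  qed
  moreover have "v \<bullet> d = 0"
    using tight k(2) by (simp add: d_def inner_diff_right)
  ultimately show thesis
    by (intro that[of k d]) (simp_all add: d_def k hull_inc)
next
  case False
  then have "0 < \<mu>"
    by simp
  then obtain k where k: "k \<in> convex hull X" "\<forall>u\<in>normal_cone X x. 0 \<le> u \<bullet> (z - x - \<mu> *\<^sub>R (k - x))"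
    by (rule exists_hull_point_with_dual_remainder[OF assms(1,2) _ bound])
  define d where "d = z - x - \<mu> *\<^sub>R (k - x)"
  have "convex hull X \<subseteq> {y. min_inner X v \<le> v \<bullet> y}"
    using min_inner_le[OF assms(1)] by (intro hull_minimal) (auto simp: convex_halfspace_ge)
  then have "\<mu> * (min_inner X v - v \<bullet> k) \<le> 0"
    using k(1) \<open>0 < \<mu>\<close> by (auto intro!: mult_nonneg_nonpos)
  moreover have "v \<bullet> d = \<mu> * (min_inner X v - v \<bullet> k)"
    using tight by (simp add: d_def inner_diff_right algebra_simps)
  moreover have "0 \<le> v \<bullet> d"
    using k(2) assms(3) by (simp add: d_def)
  ultimately have "v \<bullet> d = 0" "v \<bullet> k = min_inner X v"
    using \<open>0 < \<mu>\<close> by simp_all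
  then show thesis
    by (intro that[of k d]) (simp_all add: d_def k)
qed

section \<open>A tallest triangle without a slab\<close>

lemma mem_convex_hull_supporting_face:
  fixes X :: "'a::euclidean_space set"
  assumes "finite X" "k \<in> convex hull X" "\<forall>s\<in>X. c \<le> v \<bullet> s" "v \<bullet> k = c"
  shows "k \<in> convex hull {s\<in>X. v \<bullet> s = c}"
proof -
  have "convex hull X \<subseteq> {y. c \<le> v \<bullet> y}"
    using assms(3) by (intro hull_minimal) (auto simp: convex_halfspace_ge)
  then have "(convex hull X \<inter> {y. v \<bullet> y = c}) face_of convex hull X"
    by (intro face_of_Int_supporting_hyperplane_ge convex_convex_hull) auto
  then obtain S where S: "S \<subseteq> X" "convex hull X \<inter> {y. v \<bullet> y = c} = convex hull S"
    using face_of_convex_hull_subset[OF finite_imp_compact[OF assms(1)]] by blast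
  then have "S \<subseteq> {s\<in>X. v \<bullet> s = c}"
    using hull_inc[of _ S] by blast
  then show ?thesis
    using S(2) assms(2,4) hull_mono by blast
qed

lemma exists_pos_mult_less_on_finite:
  fixes g h :: "'b \<Rightarrow> real"
  assumes "finite A" "\<And>s. s \<in> A \<Longrightarrow> 0 < g s"
  obtains \<epsilon> where "0 < \<epsilon>" "\<And>s. s \<in> A \<Longrightarrow> \<epsilon> * h s < g s"
proof -
  have "\<forall>\<^sub>F \<epsilon> in at_right 0. \<epsilon> * h s < g s" if "s \<in> A" for s
  proof (rule order_tendstoD(2)[OF _ assms(2)[OF that]])
    show "((\<lambda>\<epsilon>. \<epsilon> * h s) \<longlongrightarrow> 0) (at_right 0)"
      by (intro tendsto_mult_left_zero tendsto_ident_at)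
  qed
  then have ev: "\<forall>\<^sub>F \<epsilon> in at_right 0. 0 < \<epsilon> \<and> (\<forall>s\<in>A. \<epsilon> * h s < g s)"
    using assms(1) by (intro eventually_conj eventually_at_right_less eventually_ball_finite) auto
  then show thesis
    using eventually_happens[OF ev] that by auto
qed

lemma exists_top_point_against_dual:
  fixes X :: "'a::euclidean_space set"
  assumes "finite X" "v \<in> normal_cone X x" "\<forall>u\<in>normal_cone X x. 0 \<le> u \<bullet> d" "v \<bullet> d = 0" "d \<noteq> 0"
  shows "\<exists>w\<in>X. v \<bullet> w = v \<bullet> x \<and> d \<bullet> (w - x) < 0"
proof (rule ccontr)
  assume "\<not> ?thesis"
  then have top: "0 \<le> d \<bullet> (s - x)" if "s \<in> X" "v \<bullet> s = v \<bullet> x" for s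
    using that by (simp add: not_less)
  have "finite {s\<in>X. v \<bullet> s < v \<bullet> x}"
    using assms(1) by simp
  then obtain \<epsilon> where \<epsilon>: "0 < \<epsilon>"
    "\<And>s. s \<in> {s\<in>X. v \<bullet> s < v \<bullet> x} \<Longrightarrow> \<epsilon> * \<bar>d \<bullet> (x - s)\<bar> < v \<bullet> (x - s)"
    by (rule exists_pos_mult_less_on_finite[where g = "\<lambda>s. v \<bullet> (x - s)"
          and h = "\<lambda>s. \<bar>d \<bullet> (x - s)\<bar>"]) (simp_all add: inner_diff_right)
  have "v - \<epsilon> *\<^sub>R d \<in> normal_cone X x"
    unfolding normal_cone_iff
  proof
    fix s assume "s \<in> X"
    then consider "v \<bullet> s = v \<bullet> x" | "v \<bullet> s < v \<bullet> x"
      using assms(2) by (force simp: normal_cone_iff)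
    then show "(v - \<epsilon> *\<^sub>R d) \<bullet> s \<le> (v - \<epsilon> *\<^sub>R d) \<bullet> x"
    proof cases
      case 1
      then show ?thesis
        using top[OF \<open>s \<in> X\<close>] \<epsilon>(1) by (simp add: inner_diff_left inner_diff_right)
    next
      case 2
      have "\<epsilon> * (d \<bullet> (x - s)) \<le> \<epsilon> * \<bar>d \<bullet> (x - s)\<bar>"
        using \<epsilon>(1) by (intro mult_left_mono) auto
      then show ?thesis
        using \<epsilon>(2)[of s] \<open>s \<in> X\<close> 2 by (simp add: inner_diff_left inner_diff_right algebra_simps)
    qed
  qed
  then have "0 \<le> (v - \<epsilon> *\<^sub>R d) \<bullet> d"
    using assms(3) by blast
  moreover have "0 < \<epsilon> * (d \<bullet> d)"
    using \<epsilon>(1) assms(5) by simp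
  ultimately show False
    using assms(4) by (simp add: inner_diff_left)
qed

lemma perp_inner_neq_on_line:
  fixes v q k :: "real^2"
  assumes "v \<noteq> 0" "v \<bullet> q = v \<bullet> k" "q \<noteq> k"
  shows "perp v \<bullet> q \<noteq> perp v \<bullet> k"
  using orthogonal_perp_imp_eq_0[OF assms(1), of "q - k"] assms(2,3) by (auto simp: inner_diff_right)

lemma strictly_between_on_line:
  fixes v e k y1 y2 :: "real^2"
  assumes "v \<noteq> 0" "v \<bullet> y1 = v \<bullet> k" "v \<bullet> y2 = v \<bullet> k" "e \<bullet> y1 < e \<bullet> k" "e \<bullet> k < e \<bullet> y2"
  obtains \<theta> where "0 < \<theta>" "\<theta> < 1" "k = (1 - \<theta>) *\<^sub>R y1 + \<theta> *\<^sub>R y2"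
proof -
  have "v \<bullet> (y2 - y1) = 0" "v \<bullet> (k - y1) = 0" "y2 - y1 \<noteq> 0"
    using assms(2-5) by (auto simp: inner_diff_right)
  then obtain \<theta> where \<theta>: "k - y1 = \<theta> *\<^sub>R (y2 - y1)"
    by (rule orthogonal_imp_parallel_real2[OF assms(1)])
  have "e \<bullet> k - e \<bullet> y1 = \<theta> * (e \<bullet> y2 - e \<bullet> y1)"
    using arg_cong[OF \<theta>, of "inner e"] by (simp add: inner_diff_right)
  then have "\<theta> = (e \<bullet> k - e \<bullet> y1) / (e \<bullet> y2 - e \<bullet> y1)"
    using assms(4,5) by simp
  then have "0 < \<theta>" "\<theta> < 1"
    using assms(4,5) by (simp_all add: divide_less_eq_1_pos)
  moreover have "k = (1 - \<theta>) *\<^sub>R y1 + \<theta> *\<^sub>R y2"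
    using \<theta> by (simp add: algebra_simps)
  ultimately show thesis
    by (rule that)
qed

lemma exists_side_around:
  fixes v :: "real^2"
  assumes "finite X" "v \<noteq> 0" "k \<notin> X" "k \<in> convex hull {s\<in>X. v \<bullet> s = v \<bullet> k}"
  obtains y1 y2 \<theta> where "y1 \<in> X" "y2 \<in> X" "y1 \<noteq> y2" "v \<bullet> y1 = v \<bullet> k" "v \<bullet> y2 = v \<bullet> k"
    "X \<inter> open_segment y1 y2 = {}" "0 < \<theta>" "\<theta> < 1" "k = (1 - \<theta>) *\<^sub>R y1 + \<theta> *\<^sub>R y2"
proof -
  define e where "e = perp v"
  define Y where "Y = {s\<in>X. v \<bullet> s = v \<bullet> k}"
  have sep: "e \<bullet> q \<noteq> e \<bullet> k" if "q \<in> Y" for q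
    using perp_inner_neq_on_line[OF assms(2)] that assms(3) by (auto simp: e_def Y_def)
  have hull_Y: "\<not> Y \<subseteq> {y. f \<bullet> y < f \<bullet> k}" for f
  proof
    assume "Y \<subseteq> {y. f \<bullet> y < f \<bullet> k}"
    then have "convex hull Y \<subseteq> {y. f \<bullet> y < f \<bullet> k}"
      by (intro hull_minimal) (auto simp: convex_halfspace_lt)
    then show False
      using assms(4) by (auto simp: Y_def)
  qed
  have fin: "finite {s\<in>Y. e \<bullet> k < e \<bullet> s}" "finite {s\<in>Y. e \<bullet> s < e \<bullet> k}"
    using assms(1) by (simp_all add: Y_def)
  have ne: "{s\<in>Y. e \<bullet> k < e \<bullet> s} \<noteq> {}" "{s\<in>Y. e \<bullet> s < e \<bullet> k} \<noteq> {}"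
    using hull_Y[of e] hull_Y[of "- e"] sep by fastforce+
  obtain y2 where y2: "is_arg_min (\<lambda>s. e \<bullet> s) (\<lambda>s. s \<in> {s\<in>Y. e \<bullet> k < e \<bullet> s}) y2"
    using ex_is_arg_min_if_finite[OF fin(1) ne(1)] by blast
  obtain y1 where y1: "is_arg_min (\<lambda>s. (- e) \<bullet> s) (\<lambda>s. s \<in> {s\<in>Y. e \<bullet> s < e \<bullet> k}) y1"
    using ex_is_arg_min_if_finite[OF fin(2) ne(2)] by blast
  have y: "y1 \<in> X" "y2 \<in> X" "v \<bullet> y1 = v \<bullet> k" "v \<bullet> y2 = v \<bullet> k" "e \<bullet> y1 < e \<bullet> k" "e \<bullet> k < e \<bullet> y2"
    using y1 y2 by (auto simp: is_arg_min_linorder Y_def)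
  have "X \<inter> open_segment y1 y2 = {}"
  proof (rule open_segment_disjoint_if_gap)
    fix q assume "q \<in> X" "v \<bullet> q = v \<bullet> y1"
    then have "q \<in> Y"
      using y(3) by (simp add: Y_def)
    then show "e \<bullet> q \<le> e \<bullet> y1 \<or> e \<bullet> y2 \<le> e \<bullet> q"
      using sep[of q] y1 y2 by (force simp: is_arg_min_linorder)
  qed (use y in auto)
  moreover have "y1 \<noteq> y2"
    using y(5,6) by auto
  moreover obtain \<theta> where "0 < \<theta>" "\<theta> < 1" "k = (1 - \<theta>) *\<^sub>R y1 + \<theta> *\<^sub>R y2"
    using y(3-6) by (rule strictly_between_on_line[OF assms(2)])
  ultimately show thesis
    using that y(1-4) by blast
qed

lemma exists_face_point_on_side:
  fixes v e k :: "real^2"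
  assumes "finite X" "v \<noteq> 0" "k \<in> convex hull {s\<in>X. v \<bullet> s = v \<bullet> k}" "v \<bullet> e = 0" "e \<noteq> 0"
  obtains c t where "c \<in> X" "v \<bullet> c = v \<bullet> k" "k - c = t *\<^sub>R e" "\<mu> * t \<le> 0"
proof -
  define Y where "Y = {s\<in>X. v \<bullet> s = v \<bullet> k}"
  have "Y \<noteq> {}"
    using assms(3) unfolding Y_def by (metis convex_hull_empty empty_iff)
  moreover have "finite Y"
    using assms(1) by (simp add: Y_def)
  ultimately obtain c where c: "is_arg_min (\<lambda>s. - ((\<mu> *\<^sub>R e) \<bullet> s)) (\<lambda>s. s \<in> Y) c"
    using ex_is_arg_min_if_finite by blast
  then have "c \<in> X" "v \<bullet> c = v \<bullet> k"
    by (auto simp: is_arg_min_linorder Y_def)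
  have "Y \<subseteq> {y. (\<mu> *\<^sub>R e) \<bullet> y \<le> (\<mu> *\<^sub>R e) \<bullet> c}"
    using c by (auto simp: is_arg_min_linorder)
  then have "convex hull Y \<subseteq> {y. (\<mu> *\<^sub>R e) \<bullet> y \<le> (\<mu> *\<^sub>R e) \<bullet> c}"
    by (rule hull_minimal) (rule convex_halfspace_le)
  then have le: "(\<mu> *\<^sub>R e) \<bullet> (k - c) \<le> 0"
    using assms(3) by (auto simp: Y_def inner_diff_right)
  have "v \<bullet> (k - c) = 0"
    using \<open>v \<bullet> c = v \<bullet> k\<close> by (simp add: inner_diff_right)
  then obtain t where t: "k - c = t *\<^sub>R e"
    using orthogonal_imp_parallel_real2[OF assms(2,4)] assms(5) by blast
  then have "\<mu> * t * (e \<bullet> e) \<le> 0"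
    using le by (simp add: mult.commute mult.left_commute)
  moreover have "0 < e \<bullet> e"
    using assms(5) by simp
  ultimately have "\<mu> * t \<le> 0"
    by (simp add: mult_le_0_iff)
  then show thesis
    using that \<open>c \<in> X\<close> \<open>v \<bullet> c = v \<bullet> k\<close> t by blast
qed

lemma tallest_triangle_without_slab_at_top_side:
  fixes X :: "point set"
  assumes "finite X" "\<not> collinear X" "x \<in> X" "v \<in> normal_cone X x" "v \<noteq> 0"
    and k: "k \<in> convex hull X" "v \<bullet> k = min_inner X v"
    and d: "\<forall>u\<in>normal_cone X x. 0 \<le> u \<bullet> d" "v \<bullet> d = 0" "d \<noteq> 0"
    and z: "z - x = \<mu> *\<^sub>R (k - x) + d" "\<mu> < 1"
  obtains a b c where "tallest_triangle X a b c" "x \<in> {a, b, c}" "\<not> supporting_slab {a, b, c} x z"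
proof -
  obtain w where "w \<in> X" "v \<bullet> w = v \<bullet> x" "(- d) \<bullet> x < (- d) \<bullet> w"
    using exists_top_point_against_dual[OF assms(1,4) d] by (auto simp: inner_diff_right)
  then obtain x' where x': "x' \<in> X" "v \<bullet> x' = v \<bullet> x" "(- d) \<bullet> x < (- d) \<bullet> x'"
    "X \<inter> open_segment x x' = {}"
    by (rule exists_next_point_on_line[OF assms(1)])
  then have "x' \<noteq> x" "x' - x \<noteq> 0" and vx': "v \<bullet> (x' - x) = 0"
    by (auto simp: inner_diff_right)
  obtain \<tau> where \<tau>: "d = \<tau> *\<^sub>R (x' - x)"
    by (rule orthogonal_imp_parallel_real2[OF assms(5) vx' d(2) \<open>x' - x \<noteq> 0\<close>])
  have "\<tau> * ((x' - x) \<bullet> (x' - x)) < 0"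
    using x'(3) by (simp add: \<tau> inner_diff_left inner_diff_right algebra_simps)
  then have "\<tau> < 0"
    using \<open>x' - x \<noteq> 0\<close> inner_ge_zero[of "x' - x"] by (auto simp: mult_less_0_iff)
  have "\<forall>s\<in>X. v \<bullet> k \<le> v \<bullet> s"
    using k(2) min_inner_le[OF assms(1)] by simp
  then have "k \<in> convex hull {s\<in>X. v \<bullet> s = v \<bullet> k}"
    using mem_convex_hull_supporting_face[OF assms(1) k(1)] by blast
  then obtain c t where c: "c \<in> X" "v \<bullet> c = v \<bullet> k" "k - c = t *\<^sub>R (x' - x)" "\<mu> * t \<le> 0"
    by (rule exists_face_point_on_side[OF assms(1,5) _ vx' \<open>x' - x \<noteq> 0\<close>])
  have T: "tallest_triangle X x x' c"
    using assms(4) \<open>\<forall>s\<in>X. v \<bullet> k \<le> v \<bullet> s\<close> c(1,2) x' \<open>x' \<noteq> x\<close>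
    by (intro tallest_triangle_if_extremal[OF assms(5,3) x'(1)]) (auto simp: normal_cone_iff)
  have "k - x = (c - x) + t *\<^sub>R (x' - x)"
    using c(3) by (simp add: algebra_simps)
  then have "z - x = \<mu> *\<^sub>R ((c - x) + t *\<^sub>R (x' - x)) + \<tau> *\<^sub>R (x' - x)"
    using z(1) \<tau> by simp
  then have "z - x = (\<mu> * t + \<tau>) *\<^sub>R (x' - x) + \<mu> *\<^sub>R (c - x)"
    by (simp add: algebra_simps)
  from not_supporting_slab_if_low_combination[OF tallest_triangle_not_collinear[OF T assms(2)] _ _ this]
  have "\<not> supporting_slab {x, x', c} x z"
    using c(4) \<open>\<tau> < 0\<close> z(2) by simp
  then show thesis
    using that T by blast
qed

lemma mult_less_1_if_weight:
  fixes \<mu> a :: real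
  assumes "\<mu> < 1" "0 \<le> a" "a \<le> 1"
  shows "\<mu> * a < 1"
proof (cases "\<mu> \<le> 0")
  case True
  then show ?thesis
    using assms(2) mult_nonpos_nonneg[of \<mu> a] by linarith
next
  case False
  then show ?thesis
    using assms mult_left_le[of a \<mu>] by linarith
qed

lemma tallest_triangle_without_slab_over_bottom_side:
  fixes X :: "point set"
  assumes "finite X" "\<not> collinear X" "x \<in> X" "v \<in> normal_cone X x" "v \<noteq> 0"
    and k: "k \<in> convex hull X" "v \<bullet> k = min_inner X v" "k \<notin> X"
    and z: "z - x = \<mu> *\<^sub>R (k - x)" "\<mu> < 1"
  obtains a b c where "tallest_triangle X a b c" "x \<in> {a, b, c}" "\<not> supporting_slab {a, b, c} x z"
proof -
  have bottom: "\<forall>s\<in>X. v \<bullet> k \<le> v \<bullet> s"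
    using k(2) min_inner_le[OF assms(1)] by simp
  then have "k \<in> convex hull {s\<in>X. v \<bullet> s = v \<bullet> k}"
    using mem_convex_hull_supporting_face[OF assms(1) k(1)] by blast
  then obtain y1 y2 \<theta> where y: "y1 \<in> X" "y2 \<in> X" "y1 \<noteq> y2" "v \<bullet> y1 = v \<bullet> k" "v \<bullet> y2 = v \<bullet> k"
    "X \<inter> open_segment y1 y2 = {}" "0 < \<theta>" "\<theta> < 1" "k = (1 - \<theta>) *\<^sub>R y1 + \<theta> *\<^sub>R y2"
    by (rule exists_side_around[OF assms(1,5) k(3)])
  have T: "tallest_triangle X y1 y2 x"
    using y(1-6) bottom assms(3,4) assms(5)
    by (intro tallest_triangle_if_extremal[of "- v"]) (auto simp: normal_cone_iff)
  have "z - x = (\<mu> * (1 - \<theta>)) *\<^sub>R (y1 - x) + (\<mu> * \<theta>) *\<^sub>R (y2 - x)"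
    using z(1) y(9) by (simp add: algebra_simps)
  moreover have "\<mu> * (1 - \<theta>) < 1" "\<mu> * \<theta> < 1"
    using mult_less_1_if_weight[OF z(2), of "1 - \<theta>"] mult_less_1_if_weight[OF z(2), of \<theta>] y(7,8)
    by simp_all
  moreover have "\<mu> * (1 - \<theta>) + \<mu> * \<theta> < 1"
    using z(2) by (simp add: algebra_simps)
  ultimately have "\<not> supporting_slab {y1, y2, x} x z"
    using tallest_triangle_not_collinear[OF T assms(2)]
    by (intro not_supporting_slab_if_low_combination) auto
  then show thesis
    using that T by blast
qed

lemma tallest_triangle_without_slab_at_bottom_vertex:
  fixes X :: "point set"
  assumes "finite X" "\<not> collinear X" "x \<in> X" "v \<in> normal_cone X x" "v \<noteq> 0"
    and k: "k \<in> X" "v \<bullet> k = min_inner X v"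
    and z: "z - x = \<mu> *\<^sub>R (k - x)" "\<mu> < 1"
  obtains a b c where "tallest_triangle X a b c" "x \<in> {a, b, c}" "\<not> supporting_slab {a, b, c} x z"
proof -
  have "\<forall>s\<in>X. v \<bullet> s \<le> v \<bullet> x" "\<forall>s\<in>X. v \<bullet> k \<le> v \<bullet> s"
    using assms(4) k(2) min_inner_le[OF assms(1)] by (simp_all add: normal_cone_iff)
  then obtain a b c where T: "tallest_triangle X a b c" "x \<in> {a, b, c}" "k \<in> {a, b, c}"
    by (rule tallest_triangle_through_pair[OF assms(1,2,5,3) k(1)])
  have "z - x = \<mu> *\<^sub>R (k - x) + 0 *\<^sub>R (k - x)"
    using z(1) by simp
  from not_supporting_slab_if_low_combination[OF tallest_triangle_not_collinear[OF T(1) assms(2)]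
      T(3) T(3) this]
  have "\<not> supporting_slab {a, b, c} x z"
    using z(2) by simp
  then show thesis
    using that T(1,2) by blast
qed

lemma exists_tallest_triangle_without_slab:
  fixes X :: "point set"
  assumes "finite X" "convex_position X" "\<not> collinear X" "x \<in> X" "\<not> supporting_slab X x z"
  obtains a b c where "tallest_triangle X a b c" "x \<in> {a, b, c}" "\<not> supporting_slab {a, b, c} x z"
proof -
  have "x \<in> frontier (convex hull X)"
    using assms(2,4) unfolding convex_position_def by blast
  then obtain v m where v: "v \<in> normal_cone X x" "v \<noteq> 0" "0 < m"
    and bound: "\<And>u. u \<in> normal_cone X x \<Longrightarrow> m * (u \<bullet> x - min_inner X u) \<le> u \<bullet> z - min_inner X u"
    and tight: "v \<bullet> z - min_inner X v = m * (v \<bullet> x - min_inner X v)"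
    by (rule min_ratio_certificate[OF assms(1,3,4) _ assms(5)]) blast
  have bound': "(1 - m) * (min_inner X u - u \<bullet> x) \<le> u \<bullet> (z - x)" if "u \<in> normal_cone X x" for u
    using bound[OF that] by (simp add: inner_diff_right algebra_simps)
  have tight': "v \<bullet> (z - x) = (1 - m) * (min_inner X v - v \<bullet> x)"
    using tight by (simp add: inner_diff_right algebra_simps)
  obtain k d where k: "k \<in> convex hull X" "v \<bullet> k = min_inner X v"
    and d: "\<forall>u\<in>normal_cone X x. 0 \<le> u \<bullet> d" "v \<bullet> d = 0"
    and z: "z - x = (1 - m) *\<^sub>R (k - x) + d"
    by (rule exists_decomposition[OF assms(1,4) v(1) bound' tight'])
  have "1 - m < 1"
    using v(3) by simp
  consider "d \<noteq> 0" | "d = 0" "k \<in> X" | "d = 0" "k \<notin> X"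
    by blast
  then show thesis
  proof cases
    case 1
    show thesis
      using that by (rule tallest_triangle_without_slab_at_top_side[OF assms(1,3,4) v(1,2) k d 1 z
          \<open>1 - m < 1\<close>])
  next
    case 2
    then have "z - x = (1 - m) *\<^sub>R (k - x)"
      using z by simp
    show thesis
      using that by (rule tallest_triangle_without_slab_at_bottom_vertex[OF assms(1,3,4) v(1,2) 2(2) k(2)
          \<open>z - x = (1 - m) *\<^sub>R (k - x)\<close> \<open>1 - m < 1\<close>])
  next
    case 3
    then have "z - x = (1 - m) *\<^sub>R (k - x)"
      using z by simp
    show thesis
      using that by (rule tallest_triangle_without_slab_over_bottom_side[OF assms(1,3,4) v(1,2) k 3(2)
          \<open>z - x = (1 - m) *\<^sub>R (k - x)\<close> \<open>1 - m < 1\<close>])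
  qed
qed

lemma tallest_triangle_subset: "tallest_triangle X a b c \<Longrightarrow> {a, b, c} \<subseteq> X"
  unfolding tallest_triangle_def is_side_def by blast

lemma admissible_centers_iff:
  "p \<in> admissible_centers X \<longleftrightarrow> (\<forall>x\<in>X. supporting_slab X x (2 *\<^sub>R p - x))"
  by (simp add: admissible_centers_def convex_position_reflect_iff)

theorem mainTheorem6:
  fixes X :: "point set"
  assumes "finite X" and "convex_position X" and "\<not> collinear X"
  shows "admissible_centers X =
    \<Inter> {admissible_centers {a, b, c} | a b c. tallest_triangle X a b c}"
proof (intro equalityI subsetI InterI)
  fix p M
  assume "p \<in> admissible_centers X" "M \<in> {admissible_centers {a, b, c} | a b c. tallest_triangle X a b c}"
  then show "p \<in> M"
    using admissible_centers_antimono[OF tallest_triangle_subset] by blast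
next
  fix p assume p: "p \<in> \<Inter> {admissible_centers {a, b, c} | a b c. tallest_triangle X a b c}"
  have "supporting_slab X x (2 *\<^sub>R p - x)" if x: "x \<in> X" for x
  proof (rule ccontr)
    assume "\<not> supporting_slab X x (2 *\<^sub>R p - x)"
    then obtain a b c where T: "tallest_triangle X a b c" "x \<in> {a, b, c}"
      "\<not> supporting_slab {a, b, c} x (2 *\<^sub>R p - x)"
      by (rule exists_tallest_triangle_without_slab[OF assms x])
    then have "p \<in> admissible_centers {a, b, c}"
      using p by blast
    then show False
      using T(2,3) unfolding admissible_centers_iff by blast
  qed
  then show "p \<in> admissible_centers X"
    unfolding admissible_centers_iff by blast
qed

end
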